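(* Let $(W,S)$ be a hyperbolic reflection group in $\mathbb{H}^n$ with a convex polytope $P$ as fundamental domain, and let $R$ be its set of reflections. Let $\mathcal{I}_p(W)$ be the set of $\xi\in\partial\mathbb{H}^n$ such that there exist $r_1,r_2\in R$ with $H_{r_1},H_{r_2}$ parallel and $\xi\in\partial H_{r_1}\cap\partial H_{r_2}$, and let $\mathcal{P}_{up}(W)$ be the set of $\mu\in\partial\mathbb{H}^n$ such that $\mu$ is an endpoint of the common perpendicular of two ultra-parallel hyperplanes $H_{r_3},H_{r_4}$ with $r_3,r_4\in R$. Then $\mathcal{I}_p(W)\cup\mathcal{P}_{up}(W)$ is dense in $\partial\mathbb{H}^n$.
   Context: $(W,S)$ is a discrete group generated by the set $S$ of reflections across the walls of a Coxeter polyhedron $P$ (a convex polyhedron whose intersecting bounding hyperplanes meet at dihedral angles that are submultiples of $\pi$), with $P$ a strict fundamental domain, and whose Coxeter system does not split as a direct product of spherical and affine reflection groups. A convex polytope (possibly with ideal vertices) is, in the hyperboloid model, the intersection of $\mathbb{H}^n$ with a convex polyhedral cone contained in $\{v\mid\langle v|v\rangle\le0,\ v_{n+1}>0\}$. $R=\{wsw^{-1}\mid w\in W,s\in S\}$, $H_r$ is the hyperplane fixed by $r$, and $\partial H$ is the set of ideal points of $H$. Distinct hyperplanes are parallel if disjoint in $\mathbb{H}^n$, and ultra-parallel if moreover they have no common ideal point; ultra-parallel hyperplanes have a unique common perpendicular (geodesic line orthogonal to both). $\partial\mathbb{H}^n$ carries the cone topology. *)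

theory Defs
  imports "HOL-Analysis.Analysis"
begin

text \<open>Minkowski space R^{n+1} is modelled as (real^'n) \<times> real; the last (time)
 coordinate is the second component. Hyperbolic space H^n is the upper sheet of the
 hyperboloid; n = CARD('n).\<close>

type_synonym 'n mvec = "(real ^ 'n) \<times> real"

definition lor :: "'n::finite mvec \<Rightarrow> 'n mvec \<Rightarrow> real" where
  "lor v w = fst v \<bullet> fst w - snd v * snd w"

definition Hn :: "'n::finite mvec set" where
  "Hn = {v. lor v v = -1 \<and> snd v > 0}"

text \<open>Ideal boundary: future light-like rays, each normalised to last coordinate 1
 (a copy of the unit sphere; its Euclidean topology is the cone topology).\<close>
definition bdry :: "'n::finite mvec set" where
  "bdry = {v. fst v \<bullet> fst v = 1 \<and> snd v = 1}"

definition ideal_of :: "'n::finite mvec \<Rightarrow> 'n mvec" where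
  "ideal_of w = (1 / snd w) *\<^sub>R w"

definition polycone :: "'n::finite mvec set \<Rightarrow> 'n mvec set" where
  "polycone E = {v. \<forall>e\<in>E. lor v e \<le> 0}"

definition polytope :: "'n::finite mvec set \<Rightarrow> 'n mvec set" where
  "polytope E = Hn \<inter> polycone E"

definition hrefl :: "'n::finite mvec \<Rightarrow> 'n mvec \<Rightarrow> 'n mvec" where
  "hrefl e v = v - (2 * lor v e) *\<^sub>R e"

text \<open>Group generated by a set S of involutions (as maps).\<close>
inductive_set gen_group :: "('a \<Rightarrow> 'a) set \<Rightarrow> ('a \<Rightarrow> 'a) set" for S where
  gen_id: "id \<in> gen_group S"
| gen_step: "s \<in> S \<Longrightarrow> g \<in> gen_group S \<Longrightarrow> s \<circ> g \<in> gen_group S"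

definition reflections_of :: "('a \<Rightarrow> 'a) set \<Rightarrow> ('a \<Rightarrow> 'a) set \<Rightarrow> ('a \<Rightarrow> 'a) set" where
  "reflections_of W S = {w \<circ> s \<circ> inv w | w s. w \<in> W \<and> s \<in> S}"

definition hplane :: "('n::finite mvec \<Rightarrow> 'n mvec) \<Rightarrow> 'n mvec set" where
  "hplane r = {x \<in> Hn. r x = x}"

definition ideal_pts :: "('n::finite mvec \<Rightarrow> 'n mvec) \<Rightarrow> 'n mvec set" where
  "ideal_pts r = {\<xi> \<in> bdry. r \<xi> = \<xi>}"

definition hparallel :: "('n::finite mvec \<Rightarrow> 'n mvec) \<Rightarrow> ('n mvec \<Rightarrow> 'n mvec) \<Rightarrow> bool" where
  "hparallel r1 r2 \<longleftrightarrow> hplane r1 \<noteq> hplane r2 \<and> hplane r1 \<inter> hplane r2 = {}"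

definition ultra_parallel :: "('n::finite mvec \<Rightarrow> 'n mvec) \<Rightarrow> ('n mvec \<Rightarrow> 'n mvec) \<Rightarrow> bool" where
  "ultra_parallel r1 r2 \<longleftrightarrow> hparallel r1 r2 \<and> ideal_pts r1 \<inter> ideal_pts r2 = {}"

definition unit_tangent :: "'n::finite mvec \<Rightarrow> 'n mvec \<Rightarrow> bool" where
  "unit_tangent x v \<longleftrightarrow> x \<in> Hn \<and> lor x v = 0 \<and> lor v v = 1"

definition geod :: "'n::finite mvec \<Rightarrow> 'n mvec \<Rightarrow> 'n mvec set" where
  "geod x v = range (\<lambda>t. cosh t *\<^sub>R x + sinh t *\<^sub>R v)"

definition geod_ends :: "'n::finite mvec \<Rightarrow> 'n mvec \<Rightarrow> 'n mvec set" where
  "geod_ends x v = {ideal_of (x + v), ideal_of (x - v)}"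

definition perp_to :: "'n::finite mvec set \<Rightarrow> ('n mvec \<Rightarrow> 'n mvec) \<Rightarrow> bool" where
  "perp_to L r \<longleftrightarrow> (\<exists>y v. unit_tangent y v \<and> y \<in> hplane r \<and> L = geod y v \<and>
      (\<forall>u. lor u y = 0 \<and> r u = u \<longrightarrow> lor v u = 0))"

definition Ip :: "('n::finite mvec \<Rightarrow> 'n mvec) set \<Rightarrow> 'n mvec set" where
  "Ip R = {\<xi> \<in> bdry. \<exists>r1\<in>R. \<exists>r2\<in>R. hparallel r1 r2 \<and> \<xi> \<in> ideal_pts r1 \<and> \<xi> \<in> ideal_pts r2}"

definition Pup :: "('n::finite mvec \<Rightarrow> 'n mvec) set \<Rightarrow> 'n mvec set" where
  "Pup R = {\<mu> \<in> bdry. \<exists>r3\<in>R. \<exists>r4\<in>R. ultra_parallel r3 r4 \<and>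
      (\<exists>x v. unit_tangent x v \<and> perp_to (geod x v) r3 \<and> perp_to (geod x v) r4 \<and>
             \<mu> \<in> geod_ends x v)}"

text \<open>E is the set of outward unit normals of the facets of a finite-volume convex
 Coxeter polytope in H^n.\<close>
definition coxeter_polytope :: "'n::finite mvec set \<Rightarrow> bool" where
  "coxeter_polytope E \<longleftrightarrow> finite E \<and> E \<noteq> {} \<and>
     (\<forall>e\<in>E. lor e e = 1) \<and>
     (\<forall>e\<in>E. \<exists>x\<in>polytope E. lor x e = 0 \<and> (\<forall>f\<in>E - {e}. lor x f < 0)) \<and>
     (\<forall>v\<in>polycone E. v \<noteq> 0 \<longrightarrow> lor v v \<le> 0 \<and> snd v > 0) \<and>
     (\<forall>e\<in>E. \<forall>f\<in>E. e \<noteq> f \<and> hplane (hrefl e) \<inter> hplane (hrefl f) \<noteq> {} \<longrightarrow>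
         (\<exists>m::nat. m \<ge> 2 \<and> lor e f = - cos (pi / real m)))"

definition discrete_action :: "('n::finite mvec \<Rightarrow> 'n mvec) set \<Rightarrow> bool" where
  "discrete_action W \<longleftrightarrow> (\<forall>K. compact K \<and> K \<subseteq> Hn \<longrightarrow> finite {w \<in> W. w ` K \<inter> K \<noteq> {}})"

definition strict_fundamental_domain :: "('n::finite mvec \<Rightarrow> 'n mvec) set \<Rightarrow> 'n mvec set \<Rightarrow> bool" where
  "strict_fundamental_domain W P \<longleftrightarrow> P \<subseteq> Hn \<and>
     (\<forall>x\<in>Hn. \<exists>!p. p \<in> P \<and> (\<exists>w\<in>W. w p = x))"

end

theory Submission
  imports Defs
begin

(*
  Endpoints of common perpendiculars alone are already dense. The W-orbit of the
  finitely many ideal vertices of P is countable, so ideal points outside it are dense,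
  and it suffices to approximate such a point xi.

  By local finiteness of the tessellation only finitely many mirrors whose unit normal b
  has bounded height snd b have xi on their positive side (lor xi b > 0). If these were
  all, a point of H^n far out towards xi would lie on the positive side of every mirror
  that has xi there, and the tile w P containing it would have xi as an ideal vertex.
  Hence xi lies on the positive side of mirrors of arbitrarily large height.

  Seen from the boundary, the positive side of a unit normal b of height s > 0 is a cap
  of euclidean radius less than 1/s around fst b / s. If b is much deeper than a first
  such mirror a, then lor a b > 1: the two mirrors are ultra-parallel, and the endpoint
  of their common perpendicular on the positive side of b lies in the small cap of b,
  next to xi.
*)

section \<open>Minkowski space\<close>

lemma lor_commute: "lor x y = lor y x"
  unfolding lor_def by (simp add: inner_commute mult.commute)

lemma lor_add_left [simp]: "lor (x + y) z = lor x z + lor y z"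
  and lor_add_right [simp]: "lor z (x + y) = lor z x + lor z y"
  and lor_diff_left [simp]: "lor (x - y) z = lor x z - lor y z"
  and lor_diff_right [simp]: "lor z (x - y) = lor z x - lor z y"
  and lor_scaleR_left [simp]: "lor (c *\<^sub>R x) z = c * lor x z"
  and lor_scaleR_right [simp]: "lor z (c *\<^sub>R x) = c * lor z x"
  and lor_minus_left [simp]: "lor (- x) z = - lor x z"
  and lor_minus_right [simp]: "lor z (- x) = - lor z x"
  and lor_zero_left [simp]: "lor 0 z = 0"
  and lor_zero_right [simp]: "lor z 0 = 0"
  unfolding lor_def
  by (auto simp: inner_add_left inner_add_right inner_diff_left inner_diff_right algebra_simps)

lemma lor_self_eq: "lor x x = norm (fst x) ^ 2 - snd x ^ 2"
  unfolding lor_def by (simp add: power2_eq_square dot_square_norm)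

lemma lor_self_nonneg_if_snd_eq_0: "snd x = 0 \<Longrightarrow> 0 \<le> lor x x"
  by (simp add: lor_self_eq)

lemma Hn_lor_self: "x \<in> Hn \<Longrightarrow> lor x x = -1"
  and Hn_snd_pos: "x \<in> Hn \<Longrightarrow> 0 < snd x"
  unfolding Hn_def by auto

lemma Hn_norm_fst_less: "x \<in> Hn \<Longrightarrow> norm (fst x) < snd x"
proof -
  assume "x \<in> Hn"
  then have "norm (fst x) ^ 2 < snd x ^ 2" "0 < snd x"
    by (auto simp: Hn_def lor_self_eq)
  then show ?thesis using power_less_imp_less_base[of "norm (fst x)" 2 "snd x"] by linarith
qed

lemma bdry_lor_self: "\<xi> \<in> bdry \<Longrightarrow> lor \<xi> \<xi> = 0"
  and bdry_snd: "\<xi> \<in> bdry \<Longrightarrow> snd \<xi> = 1"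
  and bdry_norm_fst: "\<xi> \<in> bdry \<Longrightarrow> norm (fst \<xi>) = 1"
  unfolding bdry_def lor_def by (auto simp: norm_eq_sqrt_inner)

lemma bdry_nonzero: "\<xi> \<in> bdry \<Longrightarrow> \<xi> \<noteq> 0"
  by (auto simp: bdry_def)

lemma dist_bdry: "\<xi> \<in> bdry \<Longrightarrow> \<eta> \<in> bdry \<Longrightarrow> dist \<xi> \<eta> = norm (fst \<xi> - fst \<eta>)"
  by (simp add: dist_norm norm_prod_def bdry_def)

lemma lor_time_axis: "lor (0, 1) w = - snd w" "lor w (0, 1) = - snd w"
  by (simp_all add: lor_def)

lemma lor_future_neg:
  assumes "norm (fst x) \<le> snd x" "0 < snd x" "norm (fst y) < snd y"
  shows "lor x y < 0"
proof -
  have "fst x \<bullet> fst y \<le> norm (fst x) * norm (fst y)" by (rule norm_cauchy_schwarz)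
  also have "\<dots> \<le> snd x * norm (fst y)" using assms by (simp add: mult_right_mono)
  also have "\<dots> < snd x * snd y" using assms by simp
  finally show ?thesis unfolding lor_def by simp
qed

lemma lor_Hn_Hn_neg: "x \<in> Hn \<Longrightarrow> y \<in> Hn \<Longrightarrow> lor x y < 0"
  by (intro lor_future_neg) (auto simp: Hn_norm_fst_less less_imp_le Hn_snd_pos)

lemma lor_bdry_Hn_neg: "\<xi> \<in> bdry \<Longrightarrow> x \<in> Hn \<Longrightarrow> lor \<xi> x < 0"
  by (intro lor_future_neg) (auto simp: bdry_snd bdry_norm_fst Hn_norm_fst_less)

lemma snd_pos_if_lor_Hn_neg:
  assumes "lor v v \<le> 0" "q \<in> Hn" "lor v q < 0"
  shows "0 < snd v"
proof (rule ccontr)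
  assume "\<not> 0 < snd v"
  have "norm (fst v) ^ 2 \<le> snd v ^ 2" using assms(1) by (simp add: lor_self_eq)
  then have le: "norm (fst v) \<le> - snd v"
    using \<open>\<not> 0 < snd v\<close> abs_le_square_iff[of "norm (fst v)" "snd v"] by simp
  have "v \<noteq> 0" using assms(3) by auto
  then have "snd v \<noteq> 0" using le by (auto simp: prod_eq_iff)
  then have "lor (- v) q < 0"
    using le \<open>\<not> 0 < snd v\<close> Hn_norm_fst_less[OF assms(2)] by (intro lor_future_neg) auto
  then show False using assms(3) by simp
qed

lemma bdry_eq_if_lor_nonneg:
  assumes "\<xi> \<in> bdry" "\<eta> \<in> bdry" "0 \<le> lor \<xi> \<eta>"
  shows "\<xi> = \<eta>"
proof -
  have "1 \<le> fst \<xi> \<bullet> fst \<eta>" using assms by (simp add: lor_def bdry_snd)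
  moreover have "(fst \<xi> - fst \<eta>) \<bullet> (fst \<xi> - fst \<eta>) = 2 - 2 * (fst \<xi> \<bullet> fst \<eta>)"
    using assms(1,2) by (simp add: bdry_def inner_diff_left inner_diff_right inner_commute)
  ultimately have "(fst \<xi> - fst \<eta>) \<bullet> (fst \<xi> - fst \<eta>) \<le> 0" by linarith
  then have "fst \<xi> = fst \<eta>" by (metis inner_gt_zero_iff eq_iff_diff_eq_0 not_le)
  then show ?thesis using assms(1,2) by (simp add: prod_eq_iff bdry_snd)
qed

definition hnormalize :: "'n::finite mvec \<Rightarrow> 'n mvec" where
  "hnormalize v = (1 / sqrt (- lor v v)) *\<^sub>R v"

lemma hnormalize_in_Hn:
  assumes "lor v v < 0" "0 < snd v"
  shows "hnormalize v \<in> Hn"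
  using assms by (simp add: Hn_def hnormalize_def divide_simps)

lemma lor_hnormalize_pos_iff: "lor v v < 0 \<Longrightarrow> 0 < lor (hnormalize v) w \<longleftrightarrow> 0 < lor v w"
  by (simp add: hnormalize_def zero_less_divide_iff)

lemma timelike_multiple_in_Hn:
  assumes "lor v v < 0"
  obtains c where "c *\<^sub>R v \<in> Hn"
proof (cases "0 < snd v")
  case True
  then show ?thesis using that[of "1 / sqrt (- lor v v)"] hnormalize_in_Hn[OF assms]
    by (simp add: hnormalize_def)
next
  case False
  have "snd v \<noteq> 0" using assms lor_self_nonneg_if_snd_eq_0[of v] by fastforce
  then have "hnormalize (- v) \<in> Hn" using False assms by (intro hnormalize_in_Hn) auto
  then show ?thesis using that[of "- 1 / sqrt (- lor v v)"] by (simp add: hnormalize_def)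
qed

lemma compact_Hn_snd_le: "compact {y \<in> (Hn :: 'n::finite mvec set). snd y \<le> C}"
proof (rule compact_eq_bounded_closed[THEN iffD2], rule conjI)
  let ?K = "{y \<in> (Hn :: 'n mvec set). snd y \<le> C}"
  have "?K = {y. lor y y = -1 \<and> 0 \<le> snd y \<and> snd y \<le> C}"
  proof (intro set_eqI)
    fix y :: "'n mvec"
    show "y \<in> ?K \<longleftrightarrow> y \<in> {y. lor y y = -1 \<and> 0 \<le> snd y \<and> snd y \<le> C}"
      using lor_self_nonneg_if_snd_eq_0[of y] by (cases "snd y = 0") (auto simp: Hn_def)
  qed
  then show "closed ?K"
    unfolding lor_def by (auto intro!: closed_Collect_conj closed_Collect_eq closed_Collect_le continuous_intros)
  have "norm y \<le> 2 * C" if "y \<in> ?K" for y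
    using norm_Pair_le[of "fst y" "snd y"] Hn_norm_fst_less[of y] Hn_snd_pos[of y] that by simp
  then show "bounded ?K" unfolding bounded_iff by blast
qed

section \<open>Reflections and Lorentz isometries\<close>

lemma hrefl_fixes_iff: "e \<noteq> 0 \<Longrightarrow> hrefl e x = x \<longleftrightarrow> lor x e = 0"
  unfolding hrefl_def by auto

lemma hrefl_minus: "hrefl (- e) = hrefl e"
  unfolding hrefl_def by auto

lemma hrefl_self: "lor e e = 1 \<Longrightarrow> hrefl e e = - e"
  unfolding hrefl_def by (simp add: algebra_simps scaleR_2)

lemma hrefl_hrefl: "lor e e = 1 \<Longrightarrow> hrefl e (hrefl e x) = x"
  unfolding hrefl_def by (simp add: algebra_simps)

lemma hrefl_comp_self: "lor e e = 1 \<Longrightarrow> hrefl e \<circ> hrefl e = id"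
  by (simp add: fun_eq_iff hrefl_hrefl)

lemma hrefl_eq_iff:
  assumes "lor a a = 1" "lor b b = 1"
  shows "hrefl a = hrefl b \<longleftrightarrow> b = a \<or> b = - a"
proof
  assume "hrefl a = hrefl b"
  then have "hrefl b a = - a" using hrefl_self[OF assms(1)] by simp
  then have "2 *\<^sub>R a = 2 *\<^sub>R (lor a b *\<^sub>R b)" by (simp add: hrefl_def algebra_simps scaleR_2)
  then obtain k where ab: "a = k *\<^sub>R b" by (metis scaleR_cancel_left zero_neq_numeral)
  then have "k ^ 2 = 1" using assms by (simp add: power2_eq_square)
  then show "b = a \<or> b = - a" using ab by (auto simp: power2_eq_1_iff)
qed (auto simp: hrefl_minus)

lemma
  assumes "lor a a = 1"
  shows hplane_hrefl: "hplane (hrefl a) = {x \<in> Hn. lor x a = 0}"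
    and ideal_pts_hrefl: "ideal_pts (hrefl a) = {\<xi> \<in> bdry. lor \<xi> a = 0}"
proof -
  have "a \<noteq> 0" using assms by auto
  then show "hplane (hrefl a) = {x \<in> Hn. lor x a = 0}" "ideal_pts (hrefl a) = {\<xi> \<in> bdry. lor \<xi> a = 0}"
    by (simp_all add: hplane_def ideal_pts_def hrefl_fixes_iff)
qed

lemma finite_hrefl_fiber: "finite {b. lor b b = 1 \<and> hrefl b = f}"
proof (cases "\<exists>a. lor a a = 1 \<and> hrefl a = f")
  case True
  then obtain a where "lor a a = 1" "hrefl a = f" by blast
  have "{b. lor b b = 1 \<and> hrefl b = f} \<subseteq> {a, - a}"
  proof
    fix b assume "b \<in> {b. lor b b = 1 \<and> hrefl b = f}"
    then show "b \<in> {a, - a}" using hrefl_eq_iff[OF \<open>lor a a = 1\<close>, of b] \<open>hrefl a = f\<close> by simp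
  qed
  then show ?thesis by (rule finite_subset) simp
next
  case False
  then have "{b. lor b b = 1 \<and> hrefl b = f} = {}" by blast
  then show ?thesis by (simp only: finite.emptyI)
qed

lemma hplane_point_of_height:
  assumes "lor b b = 1"
  obtains y where "y \<in> Hn" "lor y b = 0" "snd y = sqrt (1 + snd b ^ 2)"
proof -
  define v where "v = (0, 1) + snd b *\<^sub>R b"
  have vv: "lor v v = - (1 + snd b ^ 2)" and vb: "lor v b = 0"
    unfolding v_def using assms by (simp_all add: lor_time_axis power2_eq_square)
  have sv: "snd v = 1 + snd b ^ 2" unfolding v_def by (simp add: power2_eq_square)
  have "sqrt (- lor v v) = sqrt (1 + snd b ^ 2)" using vv by simp
  then have "snd (hnormalize v) = (1 + snd b ^ 2) / sqrt (1 + snd b ^ 2)"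
    unfolding hnormalize_def snd_scaleR sv by simp
  also have "\<dots> = sqrt (1 + snd b ^ 2)" by (rule real_div_sqrt) simp
  finally have "snd (hnormalize v) = sqrt (1 + snd b ^ 2)" .
  moreover have "hnormalize v \<in> Hn"
    using vv sv zero_le_power2[of "snd b"] by (intro hnormalize_in_Hn) linarith+
  moreover have "lor (hnormalize v) b = 0" using vb by (simp add: hnormalize_def)
  ultimately show ?thesis using that by blast
qed

definition lorentz_isometry :: "('n::finite mvec \<Rightarrow> 'n mvec) \<Rightarrow> bool" where
  "lorentz_isometry w \<longleftrightarrow> linear w \<and> (\<forall>x y. lor (w x) (w y) = lor x y)"

lemma lorentz_isometryI:
  "linear w \<Longrightarrow> (\<And>x y. lor (w x) (w y) = lor x y) \<Longrightarrow> lorentz_isometry w"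
  by (simp add: lorentz_isometry_def)

lemma lorentz_isometry_lor: "lorentz_isometry w \<Longrightarrow> lor (w x) (w y) = lor x y"
  and lorentz_isometry_linear: "lorentz_isometry w \<Longrightarrow> linear w"
  unfolding lorentz_isometry_def by blast+

lemma lorentz_isometry_id: "lorentz_isometry id"
  by (intro lorentz_isometryI linear_id) simp

lemma lorentz_isometry_comp: "lorentz_isometry v \<Longrightarrow> lorentz_isometry w \<Longrightarrow> lorentz_isometry (v \<circ> w)"
  by (intro lorentz_isometryI linear_compose) (simp_all add: lorentz_isometry_lor lorentz_isometry_linear)

lemma lorentz_isometry_hrefl:
  assumes "lor e e = 1"
  shows "lorentz_isometry (hrefl e)"
proof (rule lorentz_isometryI)
  show "linear (hrefl e)" unfolding hrefl_def by (rule linearI) (auto simp: algebra_simps)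
  show "lor (hrefl e x) (hrefl e y) = lor x y" for x y
    using assms by (simp add: hrefl_def lor_commute[of e x] lor_commute[of e y] algebra_simps)
qed

lemma hrefl_conj:
  assumes "lorentz_isometry w" "surj w"
  shows "w \<circ> hrefl e \<circ> inv w = hrefl (w e)"
proof
  fix v
  have "lor (inv w v) e = lor v (w e)"
    using lorentz_isometry_lor[OF assms(1), of "inv w v" e] surj_f_inv_f[OF assms(2)] by simp
  then show "(w \<circ> hrefl e \<circ> inv w) v = hrefl (w e) v"
    using linear_diff[OF lorentz_isometry_linear[OF assms(1)]] surj_f_inv_f[OF assms(2)]
    by (simp add: hrefl_def linear_scale[OF lorentz_isometry_linear[OF assms(1)]])
qed

section \<open>Groups generated by involutions\<close>

lemma gen_group_generator: "s \<in> S \<Longrightarrow> s \<in> gen_group S"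
  using gen_group.gen_step[OF _ gen_group.gen_id] by fastforce

lemma gen_group_comp: "g \<in> gen_group S \<Longrightarrow> h \<in> gen_group S \<Longrightarrow> g \<circ> h \<in> gen_group S"
  by (induction g rule: gen_group.induct) (auto simp: comp_assoc intro: gen_group.gen_step)

lemma gen_group_inverse:
  assumes "\<forall>s\<in>S. s \<circ> s = id" "g \<in> gen_group S"
  shows "inv g \<in> gen_group S" "bij g"
proof -
  from assms(2) have "\<exists>h\<in>gen_group S. h \<circ> g = id \<and> g \<circ> h = id"
  proof (induction g rule: gen_group.induct)
    case (gen_step s g)
    then obtain h where "h \<in> gen_group S" "h \<circ> g = id" "g \<circ> h = id" by blast
    moreover have "s \<circ> s = id" using assms(1) gen_step.hyps(1) by blast
    ultimately have "(h \<circ> s) \<circ> (s \<circ> g) = id" "(s \<circ> g) \<circ> (h \<circ> s) = id"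
      by (simp_all add: comp_assoc flip: comp_assoc[of s s] comp_assoc[of g h])
    moreover have "h \<circ> s \<in> gen_group S"
      using \<open>h \<in> gen_group S\<close> gen_group_comp gen_group_generator gen_step.hyps(1) by blast
    ultimately show ?case by blast
  qed (metis comp_id gen_group.gen_id)
  then obtain h where h: "h \<in> gen_group S" "h \<circ> g = id" "g \<circ> h = id" by blast
  then show "bij g" using o_bij by blast
  show "inv g \<in> gen_group S" using h inv_unique_comp[OF h(3,2)] by simp
qed

lemma countable_gen_group: "countable S \<Longrightarrow> countable (gen_group S)"
proof -
  assume "countable S"
  have "gen_group S \<subseteq> (\<lambda>l. foldr (\<circ>) l id) ` lists S"
  proof
    fix g assume "g \<in> gen_group S"
    then show "g \<in> (\<lambda>l. foldr (\<circ>) l id) ` lists S"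
    proof (induction g rule: gen_group.induct)
      case gen_id
      show ?case by (rule image_eqI[of _ _ "[]"]) auto
    next
      case (gen_step s g)
      then obtain l where "l \<in> lists S" "g = foldr (\<circ>) l id" by blast
      then have "s \<circ> g = foldr (\<circ>) (s # l) id" "s # l \<in> lists S"
        using gen_step.hyps by (simp_all only: foldr_Cons comp_apply) simp
      then show ?case by (rule image_eqI)
    qed
  qed
  moreover have "countable (lists S)" using \<open>countable S\<close> by (rule countable_lists)
  ultimately show ?thesis by (rule countable_subset[OF _ countable_image])
qed

lemma reflections_of_gen_group_subset:
  assumes "\<forall>s\<in>S. s \<circ> s = id"
  shows "reflections_of (gen_group S) S \<subseteq> gen_group S"
proof
  fix r assume "r \<in> reflections_of (gen_group S) S"
  then obtain w s where "r = w \<circ> s \<circ> inv w" "w \<in> gen_group S" "s \<in> S"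
    unfolding reflections_of_def by blast
  then show "r \<in> gen_group S"
    by (simp add: gen_group_comp gen_group_generator gen_group_inverse(1)[OF assms])
qed

lemma lorentz_isometry_gen_group:
  assumes "\<forall>e\<in>E. lor e e = 1" "w \<in> gen_group (hrefl ` E)"
  shows "lorentz_isometry w"
  using assms(2)
proof induction
  case (gen_step s g)
  then obtain e where "e \<in> E" "s = hrefl e" by blast
  then have "lorentz_isometry s" using assms(1) lorentz_isometry_hrefl by blast
  then show ?case using gen_step.IH by (rule lorentz_isometry_comp)
qed (rule lorentz_isometry_id)

section \<open>Geodesics and common perpendiculars\<close>

lemma geod_shift:
  "geod x v = geod (cosh t *\<^sub>R x + sinh t *\<^sub>R v) (sinh t *\<^sub>R x + cosh t *\<^sub>R v)"
proof -
  let ?f = "\<lambda>s. cosh s *\<^sub>R x + sinh s *\<^sub>R v"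
  have "geod (cosh t *\<^sub>R x + sinh t *\<^sub>R v) (sinh t *\<^sub>R x + cosh t *\<^sub>R v) = range (?f \<circ> (\<lambda>s. s + t))"
    unfolding geod_def by (simp add: comp_def cosh_add sinh_add algebra_simps)
  also have "\<dots> = geod x v"
    unfolding geod_def image_comp[symmetric] by simp
  finally show ?thesis ..
qed

lemma geod_point_in_Hn:
  assumes "unit_tangent x v"
  shows "cosh t *\<^sub>R x + sinh t *\<^sub>R v \<in> Hn"
proof -
  let ?y = "cosh t *\<^sub>R x + sinh t *\<^sub>R v"
  have x: "x \<in> Hn" "lor x x = -1" "lor x v = 0" "lor v x = 0" "lor v v = 1"
    using assms by (auto simp: unit_tangent_def Hn_def lor_commute)
  then have "lor ?y ?y = sinh t ^ 2 - cosh t ^ 2" by (simp add: algebra_simps power2_eq_square)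
  then have "lor ?y ?y = -1" by (simp add: cosh_square_eq)
  moreover have "lor ?y x < 0" using x by simp
  ultimately show ?thesis
    using snd_pos_if_lor_Hn_neg[of ?y x] x(1) by (simp add: Hn_def)
qed

lemma perp_to_geod_hrefl:
  assumes "unit_tangent x v"
  shows "perp_to (geod x v) (hrefl (sinh t *\<^sub>R x + cosh t *\<^sub>R v))"
proof -
  define y where "y = cosh t *\<^sub>R x + sinh t *\<^sub>R v"
  define b where "b = sinh t *\<^sub>R x + cosh t *\<^sub>R v"
  have x: "lor x x = -1" "lor x v = 0" "lor v x = 0" "lor v v = 1"
    using assms by (auto simp: unit_tangent_def Hn_def lor_commute)
  have "lor b b = cosh t ^ 2 - sinh t ^ 2" unfolding b_def using x by (simp add: algebra_simps power2_eq_square)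
  then have bb: "lor b b = 1" by (simp add: cosh_square_eq)
  have yH: "y \<in> Hn" unfolding y_def using assms by (rule geod_point_in_Hn)
  have yb: "lor y b = 0" unfolding y_def b_def using x by (simp add: algebra_simps)
  show ?thesis
    unfolding perp_to_def b_def[symmetric]
  proof (intro exI conjI allI impI)
    show "unit_tangent y b" using yH yb bb by (simp add: unit_tangent_def)
    show "y \<in> hplane (hrefl b)" using yH yb bb by (simp add: hplane_hrefl)
    show "geod x v = geod y b" unfolding y_def b_def by (rule geod_shift)
    fix u assume "lor u y = 0 \<and> hrefl b u = u"
    moreover have "b \<noteq> 0" using bb by auto
    ultimately show "lor b u = 0" using hrefl_fixes_iff[of b u] by (simp add: lor_commute[of b u])
  qed
qed

lemma ideal_of_bdry: "lor v v = 0 \<Longrightarrow> 0 < snd v \<Longrightarrow> ideal_of v \<in> bdry"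
  unfolding bdry_def ideal_of_def lor_def by (simp add: field_simps power2_eq_square)

lemma lor_ideal_of: "lor (ideal_of v) b = lor v b / snd v"
  unfolding ideal_of_def by simp

lemma common_perpendicular:
  assumes aa: "lor a a = 1" and bb: "lor b b = 1" and k: "1 < \<bar>lor a b\<bar>"
  obtains x where "unit_tangent x a" "b = (- lor x b) *\<^sub>R x + lor a b *\<^sub>R a"
    "lor a b ^ 2 = lor x b ^ 2 + 1"
proof -
  define \<tau> where "\<tau> = b - lor a b *\<^sub>R a"
  have \<tau>\<tau>: "lor \<tau> \<tau> = 1 - lor a b ^ 2" and \<tau>b: "lor \<tau> b = 1 - lor a b ^ 2" and \<tau>a: "lor \<tau> a = 0"
    unfolding \<tau>_def using aa bb by (simp_all add: lor_commute[of b a] power2_eq_square)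
  have "1 < lor a b ^ 2" using k by (metis abs_square_le_1 not_le)
  then have "lor \<tau> \<tau> < 0" using \<tau>\<tau> by simp
  then obtain c where xH: "c *\<^sub>R \<tau> \<in> Hn" by (rule timelike_multiple_in_Hn)
  define x where "x = c *\<^sub>R \<tau>"
  have c2: "c * c * (1 - lor a b ^ 2) = -1" using Hn_lor_self[OF xH] \<tau>\<tau> by simp
  have xb: "lor x b = c * (1 - lor a b ^ 2)" unfolding x_def using \<tau>b by simp
  have "- lor x b * c = - (c * c * (1 - lor a b ^ 2))" unfolding xb by (simp add: algebra_simps)
  then have "(- lor x b) *\<^sub>R x = \<tau>" unfolding x_def scaleR_scaleR using c2 by simp
  then have "b = (- lor x b) *\<^sub>R x + lor a b *\<^sub>R a" unfolding \<tau>_def by simp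
  moreover have "lor x b ^ 2 = (c * c * (1 - lor a b ^ 2)) * (1 - lor a b ^ 2)"
    unfolding xb by (simp add: power2_eq_square)
  then have "lor a b ^ 2 = lor x b ^ 2 + 1" using c2 by simp
  moreover have "unit_tangent x a" unfolding unit_tangent_def x_def using xH \<tau>a aa by simp
  ultimately show ?thesis using that by blast
qed

lemma ultra_parallel_hrefl:
  assumes aa: "lor a a = 1" and bb: "lor b b = 1" and k: "1 < \<bar>lor a b\<bar>"
  shows "ultra_parallel (hrefl a) (hrefl b)"
proof -
  obtain x where x: "unit_tangent x a" and b_eq: "b = (- lor x b) *\<^sub>R x + lor a b *\<^sub>R a"
    and sq: "lor a b ^ 2 = lor x b ^ 2 + 1"
    using common_perpendicular[OF aa bb k] by blast
  have xH: "x \<in> Hn" and xa: "lor x a = 0" using x by (auto simp: unit_tangent_def)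
  have "1 < lor a b ^ 2" using k by (metis abs_square_le_1 not_le)
  then have xb: "lor x b \<noteq> 0" using sq by auto
  have orth_x: "lor z x = 0" if "lor z a = 0" "lor z b = 0" for z
  proof -
    have "lor z b = - lor x b * lor z x + lor a b * lor z a" by (subst b_eq) simp
    then show ?thesis using that xb by simp
  qed
  then have no_common: "\<not> (lor z a = 0 \<and> lor z b = 0)" if "lor z x < 0" for z
    using that by fastforce
  show ?thesis
    unfolding ultra_parallel_def hparallel_def hplane_hrefl[OF aa] hplane_hrefl[OF bb]
      ideal_pts_hrefl[OF aa] ideal_pts_hrefl[OF bb]
  proof (intro conjI)
    have "x \<in> {x \<in> Hn. lor x a = 0}" "x \<notin> {x \<in> Hn. lor x b = 0}" using xH xa xb by simp_all
    then show "{x \<in> Hn. lor x a = 0} \<noteq> {x \<in> Hn. lor x b = 0}" by metis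
    show "{x \<in> Hn. lor x a = 0} \<inter> {x \<in> Hn. lor x b = 0} = {}"
      using no_common lor_Hn_Hn_neg[OF _ xH] by (auto simp del: split_paired_All)
    show "{\<xi> \<in> bdry. lor \<xi> a = 0} \<inter> {\<xi> \<in> bdry. lor \<xi> b = 0} = {}"
      using no_common lor_bdry_Hn_neg[OF _ xH] by (auto simp del: split_paired_All)
  qed
qed

lemma exists_Pup_pos_side:
  assumes aa: "lor a a = 1" and bb: "lor b b = 1" and k: "1 < lor a b"
    and R: "hrefl a \<in> R" "hrefl b \<in> R"
  shows "\<exists>\<mu>\<in>Pup R. 0 < lor \<mu> b"
proof -
  obtain x where x: "unit_tangent x a" and b_eq: "b = (- lor x b) *\<^sub>R x + lor a b *\<^sub>R a"
    and sq: "lor a b ^ 2 = lor x b ^ 2 + 1"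
    using common_perpendicular[OF aa bb] k by auto
  have xH: "x \<in> Hn" and xa: "lor x a = 0"  and xx: "lor x x = -1"
    using x by (auto simp: unit_tangent_def Hn_def)
  define t where "t = arsinh (- lor x b)"
  have "cosh t = lor a b"
    unfolding t_def cosh_arsinh_real using k by (simp flip: sq)
  then have "b = sinh t *\<^sub>R x + cosh t *\<^sub>R a" unfolding t_def using b_eq by simp
  then have perp: "perp_to (geod x a) (hrefl a)" "perp_to (geod x a) (hrefl b)"
    using perp_to_geod_hrefl[OF x, of 0] perp_to_geod_hrefl[OF x, of t] by simp_all
  define \<mu> where "\<mu> = ideal_of (x + a)"
  have "lor (x + a) (x + a) = 0" "lor (x + a) x < 0"
    using xx xa aa by (simp_all add: lor_commute[of a x])
  then have "0 < snd (x + a)" using snd_pos_if_lor_Hn_neg[of "x + a" x] xH by simp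
  then have \<mu>: "\<mu> \<in> bdry" "\<mu> \<in> geod_ends x a"
    unfolding \<mu>_def geod_ends_def using \<open>lor (x + a) (x + a) = 0\<close> by (auto intro: ideal_of_bdry)
  have "lor x b ^ 2 < lor a b ^ 2" using sq by simp
  then have "\<bar>lor x b\<bar> < lor a b" using power2_less_imp_less[of "\<bar>lor x b\<bar>" "lor a b"] k by simp
  then have "- lor x b < lor a b" by (simp add: abs_less_iff)
  then have "0 < lor \<mu> b"
    unfolding \<mu>_def lor_ideal_of using \<open>0 < snd (x + a)\<close> by simp
  moreover have "\<mu> \<in> Pup R"
    unfolding Pup_def using \<mu> R x perp ultra_parallel_hrefl[OF aa bb] k by fastforce
  ultimately show ?thesis by blast
qed

section \<open>Ideal points\<close>

lemma exists_Hn_pos_side: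
  assumes \<xi>: "\<xi> \<in> bdry" and fin: "finite {b \<in> B. 0 < snd b \<and> 0 < lor \<xi> b}"
  shows "\<exists>x\<in>Hn. \<forall>b\<in>B. 0 < lor \<xi> b \<longrightarrow> 0 < lor x b"
proof -
  let ?G = "{b \<in> B. 0 < snd b \<and> 0 < lor \<xi> b}"
  have ev: "\<forall>\<^sub>F \<beta> in at_top. snd b < \<beta> * lor \<xi> b" if "b \<in> ?G" for b
    using eventually_gt_at_top[of "snd b / lor \<xi> b"]
    by (rule eventually_mono) (use that in \<open>simp add: pos_divide_less_eq\<close>)
  have "\<forall>\<^sub>F \<beta> in at_top. 0 < \<beta> \<and> (\<forall>b\<in>?G. snd b < \<beta> * lor \<xi> b)"
    by (intro eventually_conj eventually_gt_at_top eventually_ball_finite fin ballI ev)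
  then obtain N :: real where "\<forall>\<beta>\<ge>N. 0 < \<beta> \<and> (\<forall>b\<in>?G. snd b < \<beta> * lor \<xi> b)"
    unfolding eventually_at_top_linorder ..
  then obtain \<beta> :: real where \<beta>: "0 < \<beta>" "\<forall>b\<in>?G. snd b < \<beta> * lor \<xi> b" by blast
  define y where "y = (0, 1) + \<beta> *\<^sub>R \<xi>"
  have lor_y: "lor y b = \<beta> * lor \<xi> b - snd b" for b
    unfolding y_def by (simp add: lor_time_axis)
  have "lor y y = -1 - 2 * \<beta>" "snd y = 1 + \<beta>"
    unfolding y_def using \<xi> by (simp_all add: lor_time_axis bdry_lor_self bdry_snd)
  then have "lor y y < 0" "0 < snd y" using \<beta>(1) by simp_all
  then have "hnormalize y \<in> Hn" by (rule hnormalize_in_Hn)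
  moreover have "0 < lor (hnormalize y) b" if "b \<in> B" "0 < lor \<xi> b" for b
  proof (cases "0 < snd b")
    case True
    then have "snd b < \<beta> * lor \<xi> b" using \<beta>(2) that by blast
    then show ?thesis using \<open>lor y y < 0\<close> by (simp add: lor_hnormalize_pos_iff lor_y)
  next
    case False
    moreover have "0 < \<beta> * lor \<xi> b" using that \<beta>(1) by simp
    ultimately show ?thesis using \<open>lor y y < 0\<close> by (simp add: lor_hnormalize_pos_iff lor_y)
  qed
  ultimately show ?thesis by blast
qed

lemma bdry_pos_side_norm_less_one:
  assumes \<xi>: "\<xi> \<in> bdry" and pos: "0 < lor \<xi> b" and bb: "lor b b = 1" and s: "0 < snd b"
  shows "norm (fst b - snd b *\<^sub>R fst \<xi>) < 1"
proof -
  have "norm (fst b - snd b *\<^sub>R fst \<xi>) ^ 2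
      = (fst b - snd b *\<^sub>R fst \<xi>) \<bullet> (fst b - snd b *\<^sub>R fst \<xi>)"
    by (rule power2_norm_eq_inner)
  also have "\<dots> = fst b \<bullet> fst b - 2 * snd b * (fst \<xi> \<bullet> fst b) + snd b ^ 2 * (fst \<xi> \<bullet> fst \<xi>)"
    by (simp add: inner_diff_left inner_diff_right inner_commute power2_eq_square algebra_simps)
  also have "\<dots> = 1 + 2 * snd b * (snd b - fst \<xi> \<bullet> fst b)"
    using \<xi> bb by (simp add: bdry_def lor_def power2_eq_square algebra_simps)
  also have "\<dots> < 1"
    using pos s \<xi> by (simp add: lor_def bdry_snd mult_pos_neg)
  finally show ?thesis by (simp add: power_less_one_iff abs_square_less_1)
qed

lemma dist_bdry_pos_side:
  assumes "\<xi> \<in> bdry" "\<eta> \<in> bdry" "lor b b = 1" "0 < snd b" "0 < lor \<xi> b" "0 < lor \<eta> b"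
  shows "dist \<xi> \<eta> < 2 / snd b"
proof -
  have "snd b *\<^sub>R (fst \<xi> - fst \<eta>) = (fst b - snd b *\<^sub>R fst \<eta>) - (fst b - snd b *\<^sub>R fst \<xi>)"
    by (simp add: algebra_simps)
  then have "snd b * norm (fst \<xi> - fst \<eta>)
      \<le> norm (fst b - snd b *\<^sub>R fst \<eta>) + norm (fst b - snd b *\<^sub>R fst \<xi>)"
    using norm_triangle_ineq4 assms(4) by (metis abs_of_pos norm_scaleR)
  also have "\<dots> < 2" using bdry_pos_side_norm_less_one assms by (smt (verit))
  finally show ?thesis using assms by (simp add: dist_bdry pos_less_divide_eq mult.commute)
qed

lemma one_less_lor_if_deep:
  assumes \<xi>: "\<xi> \<in> bdry" and bb: "lor b b = 1" and pos: "0 < lor \<xi> a" "0 < lor \<xi> b"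
    and deep: "(1 + norm (fst a)) / lor \<xi> a < snd b"
  shows "1 < lor a b"
proof -
  have s: "0 < snd b" using deep pos by (smt (verit) divide_pos_pos norm_ge_zero)
  have "lor a b - snd b * lor \<xi> a = fst a \<bullet> (fst b - snd b *\<^sub>R fst \<xi>)"
    using \<xi> by (simp add: lor_def bdry_snd inner_diff_right inner_commute algebra_simps)
  also have "\<dots> \<ge> - norm (fst a)"
  proof -
    have "\<bar>fst a \<bullet> (fst b - snd b *\<^sub>R fst \<xi>)\<bar> \<le> norm (fst a) * norm (fst b - snd b *\<^sub>R fst \<xi>)"
      by (rule Cauchy_Schwarz_ineq2)
    also have "\<dots> \<le> norm (fst a)"
      using bdry_pos_side_norm_less_one[OF \<xi> pos(2) bb s] by (simp add: mult_left_le)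
    finally show ?thesis by linarith
  qed
  finally show ?thesis using deep pos(1) by (simp add: pos_divide_less_eq)
qed

lemma bdry_great_circle:
  assumes "\<xi> \<in> bdry" "w \<bullet> w = 1" "fst \<xi> \<bullet> w = 0"
  shows "(cos \<theta> *\<^sub>R fst \<xi> + sin \<theta> *\<^sub>R w, 1) \<in> bdry"
proof -
  have "(cos \<theta> *\<^sub>R fst \<xi> + sin \<theta> *\<^sub>R w) \<bullet> (cos \<theta> *\<^sub>R fst \<xi> + sin \<theta> *\<^sub>R w)
      = (cos \<theta>)\<^sup>2 + (sin \<theta>)\<^sup>2"
    using assms by (simp add: bdry_def inner_add_left inner_add_right inner_commute power2_eq_square)
  then show ?thesis by (simp add: bdry_def)
qed

lemma uncountable_bdry_ball:
  assumes card: "2 \<le> CARD('n)" and \<xi>: "(\<xi> :: 'n::finite mvec) \<in> bdry" and \<epsilon>: "0 < \<epsilon>"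
  shows "uncountable (bdry \<inter> ball \<xi> \<epsilon>)"
proof
  assume cnt: "countable (bdry \<inter> ball \<xi> \<epsilon>)"
  obtain w0 where w0: "w0 \<noteq> 0" "orthogonal (fst \<xi>) w0"
    using orthogonal_to_vector_exists[of "fst \<xi>"] card by auto
  define w where "w = (1 / norm w0) *\<^sub>R w0"
  have ww: "w \<bullet> w = 1" and \<xi>w: "fst \<xi> \<bullet> w = 0"
    using w0 by (auto simp: w_def orthogonal_def dot_square_norm power2_eq_square)
  define f where "f \<theta> = (cos \<theta> *\<^sub>R fst \<xi> + sin \<theta> *\<^sub>R w, 1 :: real)" for \<theta>
  have f_bdry: "f \<theta> \<in> bdry" for \<theta>
    unfolding f_def using \<xi> ww \<xi>w by (rule bdry_great_circle)
  have "continuous (at 0) f" unfolding f_def by (intro continuous_intros)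
  moreover have "f 0 = \<xi>" using \<xi> by (simp add: f_def bdry_def prod_eq_iff)
  ultimately obtain d where d: "0 < d" "\<forall>\<theta>. dist \<theta> 0 < d \<longrightarrow> dist (f \<theta>) \<xi> < \<epsilon>"
    using \<epsilon> unfolding continuous_at_eps_delta by metis
  define d' where "d' = min d 1"
  have sin_f: "fst (f \<theta>) \<bullet> w = sin \<theta>" for \<theta>
    using ww \<xi>w by (simp add: f_def inner_add_left)
  have inj: "inj_on f {0<..<d'}"
  proof (rule inj_onI)
    fix s t assume st: "s \<in> {0<..<d'}" "t \<in> {0<..<d'}" "f s = f t"
    have "- (pi / 2) \<le> s" "s \<le> pi / 2" "- (pi / 2) \<le> t" "t \<le> pi / 2"
      using st(1,2) pi_ge_two by (auto simp: d'_def)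
    then have "arcsin (sin s) = s" "arcsin (sin t) = t" by (simp_all add: arcsin_sin)
    then show "s = t" by (metis sin_f st(3))
  qed
  have "uncountable (f ` {0<..<d'})"
    using countable_image_inj_on[OF _ inj] uncountable_open_interval[of 0 d'] d(1) by (auto simp: d'_def)
  moreover have "f ` {0<..<d'} \<subseteq> bdry \<inter> ball \<xi> \<epsilon>"
  proof
    fix z assume "z \<in> f ` {0<..<d'}"
    then obtain \<theta> where "z = f \<theta>" "0 < \<theta>" "\<theta> < d" by (auto simp: d'_def)
    then show "z \<in> bdry \<inter> ball \<xi> \<epsilon>" using d(2) f_bdry by (simp add: dist_commute)
  qed
  ultimately show False using cnt countable_subset by blast
qed

lemma ideal_of_scaleR: "r \<noteq> 0 \<Longrightarrow> ideal_of (r *\<^sub>R v) = ideal_of v"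
  by (simp add: ideal_of_def)

lemma ideal_of_bdry_id: "\<xi> \<in> bdry \<Longrightarrow> ideal_of \<xi> = \<xi>"
  by (simp add: ideal_of_def bdry_snd)

section \<open>The reflection group of a Coxeter polytope\<close>

lemma polycone_scaleR: "v \<in> polycone E \<Longrightarrow> 0 \<le> r \<Longrightarrow> r *\<^sub>R v \<in> polycone E"
  by (simp add: polycone_def mult_nonneg_nonpos)

lemma exists_small_perturbation:
  fixes g h :: "'a \<Rightarrow> real"
  assumes "finite F" "\<forall>f\<in>F. g f < 0"
  obtains \<delta> where "0 < \<delta>" "\<delta> < 1" "\<forall>f\<in>F. g f - \<delta> * h f < 0"
proof -
  have "\<forall>\<^sub>F \<delta> in nhds 0. g f - \<delta> * h f < 0" if "f \<in> F" for f
  proof (rule order_tendstoD(2))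
    show "((\<lambda>\<delta>. g f - \<delta> * h f) \<longlongrightarrow> g f - 0 * h f) (nhds 0)"
      by (intro tendsto_intros filterlim_ident)
    show "g f - 0 * h f < 0" using that assms(2) by simp
  qed
  then have "\<forall>\<^sub>F \<delta> in nhds 0. \<forall>f\<in>F. g f - \<delta> * h f < 0"
    using assms(1) by (simp add: eventually_ball_finite)
  then obtain d where "0 < d" "\<forall>\<delta>. dist \<delta> 0 < d \<longrightarrow> (\<forall>f\<in>F. g f - \<delta> * h f < 0)"
    unfolding eventually_nhds_metric by blast
  then show ?thesis using that[of "min (d / 2) (1 / 2)"] by simp
qed

locale hyperbolic_reflection_group =
  fixes E :: "'n::finite mvec set"
  assumes coxeter: "coxeter_polytope E"
    and discrete: "discrete_action (gen_group (hrefl ` E))"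
    and fundamental: "strict_fundamental_domain (gen_group (hrefl ` E)) (polytope E)"
begin

abbreviation W :: "('n mvec \<Rightarrow> 'n mvec) set" where
  "W \<equiv> gen_group (hrefl ` E)"

abbreviation R :: "('n mvec \<Rightarrow> 'n mvec) set" where
  "R \<equiv> reflections_of W (hrefl ` E)"

lemma finite_E: "finite E"
  and unit_E: "e \<in> E \<Longrightarrow> lor e e = 1"
  and polycone_future: "v \<in> polycone E \<Longrightarrow> v \<noteq> 0 \<Longrightarrow> lor v v \<le> 0 \<and> 0 < snd v"
  using coxeter unfolding coxeter_polytope_def by blast+

lemma generators_involutive: "\<forall>s\<in>hrefl ` E. s \<circ> s = id"
  using hrefl_comp_self unit_E by blast

lemma W_lorentz_isometry: "w \<in> W \<Longrightarrow> lorentz_isometry w"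
  using lorentz_isometry_gen_group unit_E by blast

lemma W_bij: "w \<in> W \<Longrightarrow> bij w"
  using gen_group_inverse(2)[OF generators_involutive] .

lemma countable_W: "countable W"
  using finite_E by (intro countable_gen_group countable_finite) simp

definition walls :: "'n mvec set" where
  "walls = {b. lor b b = 1 \<and> hrefl b \<in> R}"

lemma walls_subset_W: "b \<in> walls \<Longrightarrow> hrefl b \<in> W"
  using reflections_of_gen_group_subset[OF generators_involutive] by (auto simp: walls_def)

lemma image_in_walls:
  assumes "w \<in> W" "e \<in> E"
  shows "w e \<in> walls"
proof -
  have "hrefl (w e) = w \<circ> hrefl e \<circ> inv w"
    using hrefl_conj W_lorentz_isometry W_bij bij_is_surj assms(1) by metis
  then have "hrefl (w e) \<in> R" unfolding reflections_of_def using assms by blast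
  moreover have "lor (w e) (w e) = 1"
    using lorentz_isometry_lor[OF W_lorentz_isometry[OF assms(1)]] unit_E[OF assms(2)] by simp
  ultimately show ?thesis by (simp add: walls_def)
qed

lemma finite_walls_snd_bounded: "finite {b \<in> walls. \<bar>snd b\<bar> \<le> M}"
proof -
  define K where "K = {y \<in> (Hn :: 'n mvec set). snd y \<le> sqrt (1 + M ^ 2)}"
  define F where "F = {w \<in> W. w ` K \<inter> K \<noteq> {}}"
  have "finite F"
    using discrete compact_Hn_snd_le unfolding discrete_action_def F_def K_def by blast
  have "{b \<in> walls. \<bar>snd b\<bar> \<le> M} \<subseteq> (\<Union>f\<in>F. {b. lor b b = 1 \<and> hrefl b = f})"
  proof
    fix b assume b: "b \<in> {b \<in> walls. \<bar>snd b\<bar> \<le> M}"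
    then have bb: "lor b b = 1" by (simp add: walls_def)
    obtain y where y: "y \<in> Hn" "lor y b = 0" "snd y = sqrt (1 + snd b ^ 2)"
      using hplane_point_of_height[OF bb] .
    have "snd b ^ 2 \<le> M ^ 2" using b power_mono[of "\<bar>snd b\<bar>" M 2] by simp
    then have "y \<in> K" using y by (simp add: K_def)
    have "b \<noteq> 0" using bb by auto
    then have "hrefl b y = y" using y(2) by (simp add: hrefl_fixes_iff)
    then have "y \<in> hrefl b ` K \<inter> K" using \<open>y \<in> K\<close> by (metis IntI imageI)
    then have "hrefl b \<in> F" unfolding F_def using walls_subset_W b by blast
    then show "b \<in> (\<Union>f\<in>F. {b. lor b b = 1 \<and> hrefl b = f})" using bb by blast
  qed
  then show ?thesis
    using \<open>finite F\<close> finite_hrefl_fiber by (blast intro: finite_subset)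
qed

text \<open>An ideal vertex is determined by the facets through it: if \<open>c\<close> and \<open>c'\<close> lie on the
  same facets, then \<open>c - \<delta> c'\<close> stays in the cone for small \<open>\<delta> > 0\<close>, which forces
  \<open>lor c c' \<ge> 0\<close>.\<close>

lemma finite_cusps: "finite (polycone E \<inter> bdry)"
proof -
  define active where "active c = {e \<in> E. lor c e = 0}" for c
  have "inj_on active (polycone E \<inter> bdry)"
  proof (rule inj_onI)
    fix c c' assume c: "c \<in> polycone E \<inter> bdry" and c': "c' \<in> polycone E \<inter> bdry"
      and same: "active c = active c'"
    have "finite {f \<in> E. lor c f < 0}" "\<forall>f\<in>{f \<in> E. lor c f < 0}. lor c f < 0"
      using finite_E by simp_all
    then obtain \<delta> where \<delta>: "0 < \<delta>" "\<delta> < 1" "\<forall>f\<in>{f \<in> E. lor c f < 0}. lor c f - \<delta> * lor c' f < 0"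
      by (rule exists_small_perturbation[where h = "\<lambda>f. lor c' f"])
    have "lor (c - \<delta> *\<^sub>R c') f \<le> 0" if "f \<in> E" for f
    proof (cases "lor c f < 0")
      case True
      then have "lor c f - \<delta> * lor c' f < 0" using \<delta>(3) that by blast
      then show ?thesis by simp
    next
      case False
      then have "f \<in> active c" using c that by (auto simp: active_def polycone_def)
      then have "lor c' f = 0" using same unfolding active_def by blast
      then show ?thesis using False c that by (auto simp: polycone_def)
    qed
    then have "c - \<delta> *\<^sub>R c' \<in> polycone E" by (simp add: polycone_def)
    moreover have "c - \<delta> *\<^sub>R c' \<noteq> 0" using c c' \<delta>(2) by (auto simp: bdry_snd prod_eq_iff)
    ultimately have "lor (c - \<delta> *\<^sub>R c') (c - \<delta> *\<^sub>R c') \<le> 0" using polycone_future by blast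
    then have "0 \<le> \<delta> * lor c c'"
      using c c' by (simp add: bdry_lor_self lor_commute[of c' c] algebra_simps)
    then have "0 \<le> lor c c'" using \<delta>(1) by (simp add: zero_le_mult_iff)
    then show "c = c'" using c c' bdry_eq_if_lor_nonneg by blast
  qed
  moreover have "active ` (polycone E \<inter> bdry) \<subseteq> Pow E" by (auto simp: active_def)
  then have "finite (active ` (polycone E \<inter> bdry))" using finite_E by (simp add: finite_subset)
  ultimately show ?thesis using finite_imageD by blast
qed

text \<open>The ideal vertices of \<open>P\<close> are the points of \<open>polycone E \<inter> bdry\<close>.\<close>

definition cusp_orbit :: "'n mvec set" where
  "cusp_orbit = (\<lambda>(w, c). ideal_of (w c)) ` (W \<times> (polycone E \<inter> bdry))"

lemma countable_cusp_orbit: "countable cusp_orbit"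
  unfolding cusp_orbit_def using countable_W finite_cusps by (simp add: countable_finite)

lemma in_cusp_orbit_if_walls_bounded:
  assumes \<xi>: "\<xi> \<in> bdry" and bounded: "\<forall>b\<in>walls. 0 < lor \<xi> b \<longrightarrow> snd b \<le> M"
  shows "\<xi> \<in> cusp_orbit"
proof -
  have "{b \<in> walls. 0 < snd b \<and> 0 < lor \<xi> b} \<subseteq> {b \<in> walls. \<bar>snd b\<bar> \<le> M}"
    using bounded by auto
  then have "finite {b \<in> walls. 0 < snd b \<and> 0 < lor \<xi> b}"
    using finite_walls_snd_bounded by (rule finite_subset)
  then obtain x where x: "x \<in> Hn" "\<forall>b\<in>walls. 0 < lor \<xi> b \<longrightarrow> 0 < lor x b"
    using exists_Hn_pos_side[OF \<xi>] by blast
  then obtain p w where pw: "p \<in> polytope E" "w \<in> W" "w p = x"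
    using fundamental unfolding strict_fundamental_domain_def by blast
  have iso: "lorentz_isometry w" using W_lorentz_isometry pw(2) by blast
  have surj: "surj w" using W_bij[OF pw(2)] by (rule bij_is_surj)
  define c where "c = inv w \<xi>"
  have wc: "w c = \<xi>" unfolding c_def using surj by (rule surj_f_inv_f)
  have "lor c e \<le> 0" if e: "e \<in> E" for e
  proof (rule ccontr)
    assume "\<not> lor c e \<le> 0"
    then have "0 < lor \<xi> (w e)" using lorentz_isometry_lor[OF iso, of c e] wc by simp
    then have "0 < lor x (w e)" using x(2) image_in_walls[OF pw(2) e] by blast
    moreover have "lor x (w e) = lor p e" using lorentz_isometry_lor[OF iso] pw(3) by metis
    ultimately show False using pw(1) e by (auto simp: polytope_def polycone_def)
  qed
  then have cP: "c \<in> polycone E" by (simp add: polycone_def)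
  have "c \<noteq> 0" using wc \<xi> linear_0[OF lorentz_isometry_linear[OF iso]] bdry_nonzero by metis
  then have sc: "0 < snd c" using polycone_future cP by blast
  have cc: "lor c c = 0" using lorentz_isometry_lor[OF iso, of c c] wc bdry_lor_self[OF \<xi>] by simp
  have "ideal_of c \<in> polycone E \<inter> bdry"
    using ideal_of_bdry[OF cc sc] polycone_scaleR[OF cP, of "1 / snd c"] sc
    by (simp add: ideal_of_def)
  moreover have "ideal_of (w (ideal_of c)) = \<xi>"
    using sc \<xi> linear_scale[OF lorentz_isometry_linear[OF iso]]
    by (simp add: ideal_of_def[of c] wc ideal_of_scaleR ideal_of_bdry_id)
  ultimately show ?thesis unfolding cusp_orbit_def using pw(2) by force
qed

lemma deep_wall_exists:
  assumes "\<xi> \<in> bdry" "\<xi> \<notin> cusp_orbit"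
  shows "\<exists>b\<in>walls. 0 < lor \<xi> b \<and> M < snd b"
  using in_cusp_orbit_if_walls_bounded[OF assms(1), of M] assms(2) by force

lemma bdry_subset_closure_Pup:
  assumes "2 \<le> CARD('n)"
  shows "bdry \<subseteq> closure (Pup R)"
proof
  fix \<xi> :: "'n mvec" assume \<xi>: "\<xi> \<in> bdry"
  show "\<xi> \<in> closure (Pup R)" unfolding closure_approachable
  proof (intro allI impI)
    fix \<epsilon> :: real assume "0 < \<epsilon>"
    then have "uncountable (bdry \<inter> ball \<xi> (\<epsilon> / 2))" using uncountable_bdry_ball[OF assms \<xi>] by simp
    then have "\<not> bdry \<inter> ball \<xi> (\<epsilon> / 2) \<subseteq> cusp_orbit"
      using countable_cusp_orbit countable_subset by blast
    then obtain \<xi>0 where "\<xi>0 \<in> bdry \<inter> ball \<xi> (\<epsilon> / 2)" "\<xi>0 \<notin> cusp_orbit" by blast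
    then have \<xi>0: "\<xi>0 \<in> bdry" "dist \<xi> \<xi>0 < \<epsilon> / 2" "\<xi>0 \<notin> cusp_orbit" by simp_all
    obtain a where a: "a \<in> walls" "0 < lor \<xi>0 a"
      using deep_wall_exists[OF \<xi>0(1,3)] by blast
    obtain b where b: "b \<in> walls" "0 < lor \<xi>0 b"
      and deep: "max ((1 + norm (fst a)) / lor \<xi>0 a) (4 / \<epsilon>) < snd b"
      using deep_wall_exists[OF \<xi>0(1,3)] by blast
    have aa: "lor a a = 1" and bb: "lor b b = 1" using a(1) b(1) by (simp_all add: walls_def)
    have "1 < lor a b" using one_less_lor_if_deep[OF \<xi>0(1) bb a(2) b(2)] deep by simp
    then obtain \<mu> where \<mu>: "\<mu> \<in> Pup R" "0 < lor \<mu> b"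
      using exists_Pup_pos_side[OF aa bb \<open>1 < lor a b\<close>, of R] a(1) b(1) unfolding walls_def by blast
    have "4 / \<epsilon> < snd b" using deep by simp
    then have sb: "0 < snd b" using \<open>0 < \<epsilon>\<close> by (smt (verit) divide_pos_pos)
    then have "dist \<mu> \<xi>0 < 2 / snd b"
      using \<mu> \<xi>0(1) bb b(2) by (intro dist_bdry_pos_side) (auto simp: Pup_def)
    also have "\<dots> < \<epsilon> / 2" using \<open>4 / \<epsilon> < snd b\<close> \<open>0 < \<epsilon>\<close> sb by (simp add: field_simps)
    finally have "dist \<mu> \<xi>0 < \<epsilon> / 2" .
    then have "dist \<mu> \<xi> < \<epsilon>" using \<xi>0(2) dist_triangle[of \<mu> \<xi> \<xi>0] by (simp add: dist_commute)
    then show "\<exists>\<mu>\<in>Pup R. dist \<mu> \<xi> < \<epsilon>" using \<mu>(1) by blast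
  qed
qed

end

theorem mainTheorem11:
  fixes E :: "('n::finite) mvec set"
  assumes "CARD('n) \<ge> 2"
    and "coxeter_polytope E"
    and "discrete_action (gen_group (hrefl ` E))"
    and "strict_fundamental_domain (gen_group (hrefl ` E)) (polytope E)"
  shows "bdry \<subseteq> closure (Ip (reflections_of (gen_group (hrefl ` E)) (hrefl ` E))
                          \<union> Pup (reflections_of (gen_group (hrefl ` E)) (hrefl ` E)))"
proof -
  interpret hyperbolic_reflection_group E
    using assms(2-4) by unfold_locales
  have "bdry \<subseteq> closure (Pup R)" using assms(1) by (rule bdry_subset_closure_Pup)
  also have "\<dots> \<subseteq> closure (Ip R \<union> Pup R)" by (rule closure_mono) blast
  finally show ?thesis .
qed

end
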